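(* Let $(X,d^X)$ be a compact metric space, $f$ a homeomorphism of $X$ and $\mu$ a Borel measure on $X$ with $\mu(X)>0$. Then: (i) if $\mu$ is topologically stable with respect to $f$, then $Ts^\mu_f(X)=X$; (ii) for every compact metric space $(Y,d^Y)$ and every homeomorphism $h:X\to Y$, $Ts^{h^*(\mu)}_{h\circ f\circ h^{-1}}(Y)=h(Ts^\mu_f(X))$ and $Sts^{h^*(\mu)}_{h\circ f\circ h^{-1}}(Y)=h(Sts^\mu_f(X))$, where $h^*(\mu)(A)=\mu(h^{-1}(A))$; (iii) if $\mu$ is non-atomic and $x$ is a topologically stable point of $f$, then $x$ is a strong $\mu$-topologically stable point of $f$.
   Context: $B(x,\epsilon)$ and $B[x,\epsilon]$ are the open and closed balls; $\mathcal{O}_g(x)=\{g^n(x):n\in\mathbb{Z}\}$; $d_{C^0}(f,g)=\sup_x d(f(x),g(x))$. For $Z\subset X$, a set-valued map $H:Z\to 2^X$ has domain $Dom(H)=\{z\in Z:H(z)\ne\emptyset\}$; it is compact valued if each $H(z)$ is compact; $d(H,Id)\le\epsilon$ means $H(z)\subset B[z,\epsilon]$ for all $z\in Z$; $H$ is upper semi-continuous if for each $z\in Dom(H)$ and each open $O\supset H(z)$ there is $\gamma>0$ with $H(w)\subset O$ for all $w\in Z$ with $d(w,z)<\gamma$; $f\circ H=H\circ g$ means $f(H(z))=H(g(z))$ for all $z$. $\mu$ is non-atomic if $\mu(\{x\})=0$ for all $x$. $\mu$ is topologically stable w.r.t. $f$ if for every $\epsilon>0$ there is $\delta>0$ such that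 for every homeomorphism $g$ with $d_{C^0}(f,g)\le\delta$ there is an upper semi-continuous compact valued $H:X\to 2^X$ with measurable domain such that $\mu(X\setminus Dom(H))=0$, $\mu(H(x))=0$ for all $x$, $d(H,Id)\le\epsilon$ and $f\circ H=H\circ g$. A point $x$ is a $\mu$-topologically stable point of $f$ if for every $\epsilon>0$ there is $\delta>0$ such that for every homeomorphism $g$ of $X$ with $d_{C^0}(f,g)\le\delta$ there is an upper semi-continuous compact valued $H:\overline{\mathcal{O}_g(x)}\to 2^X$ with measurable domain such that (i) $\mu(H(z))=0$ for each $z\in B(x,\delta/4)\cap\overline{\mathcal{O}_g(x)}$, (ii) $d(H,Id)\le\epsilon$, (iii) $f\circ H=H\circ g$. $x$ is a strong $\mu$-topologically stable point if moreover (for the given $\epsilon$, together with $\delta$) there is a Borel set $B\subset X$ with $\mu(X\setminus B)=0$ such that additionally (iv) $\mu(X\setminus Dom(H))\le\mu(X\setminus U)$, where $U=B\cap B(x,\delta)\cap\overline{\mathcal{O}_g(x)}$. $Ts^\mu_f(X)$ and $Sts^\mu_f(X)$ denote the sets of $\mu$-topologically stable and strong $\mu$-topologically stable points. $x$ is a topologically stable point of $f$ if for every $\epsilon>0$ there is $\delta>0$ such that for every homeomorphism $g$ with $d_{C^0}(f,g)\le\delta$ there is a continuous $h:\overline{\mathcal{O}_g(x)}\to X$ with $f\circ h=h\circ g$ and $d(h(z),z)\le\epsilon$ for all $z\in\overline{\mathcal{O}_g(x)}$. *)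

theory Defs
  imports "HOL-Probability.Probability"
begin

text \<open>The compact metric space X is the universe of a type of class metric_space
  with compact UNIV.  A set-valued map H : Z -> 2^X is modelled as a function
  H :: 'a => 'a set, of which only the values on Z matter.\<close>

definition homeo :: "('a::topological_space \<Rightarrow> 'a) \<Rightarrow> bool" where
  "homeo f \<longleftrightarrow> (\<exists>g. homeomorphism UNIV UNIV f g)"

definition dC0 :: "('a \<Rightarrow> 'b::metric_space) \<Rightarrow> ('a \<Rightarrow> 'b) \<Rightarrow> real" where
  "dC0 f g = (SUP x. dist (f x) (g x))"

definition orbit :: "('a \<Rightarrow> 'a) \<Rightarrow> 'a \<Rightarrow> 'a set" where
  "orbit g x = {(g ^^ n) x | n. True} \<union> {(inv g ^^ n) x | n. True}"

definition Dom :: "'a set \<Rightarrow> ('a \<Rightarrow> 'b set) \<Rightarrow> 'a set" where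
  "Dom Z H = {z \<in> Z. H z \<noteq> {}}"

definition compact_valued :: "'a set \<Rightarrow> ('a \<Rightarrow> 'b::topological_space set) \<Rightarrow> bool" where
  "compact_valued Z H \<longleftrightarrow> (\<forall>z\<in>Z. compact (H z))"

definition usc :: "'a::metric_space set \<Rightarrow> ('a \<Rightarrow> 'b::topological_space set) \<Rightarrow> bool" where
  "usc Z H \<longleftrightarrow> (\<forall>z\<in>Dom Z H. \<forall>V. open V \<and> H z \<subseteq> V \<longrightarrow>
      (\<exists>\<gamma>>0. \<forall>w\<in>Z. dist w z < \<gamma> \<longrightarrow> H w \<subseteq> V))"

definition dist_Id_le :: "'a::metric_space set \<Rightarrow> ('a \<Rightarrow> 'a set) \<Rightarrow> real \<Rightarrow> bool" where
  "dist_Id_le Z H \<epsilon> \<longleftrightarrow> (\<forall>z\<in>Z. H z \<subseteq> cball z \<epsilon>)"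

definition conj_rel :: "'a set \<Rightarrow> ('a \<Rightarrow> 'a) \<Rightarrow> ('a \<Rightarrow> 'a set) \<Rightarrow> ('a \<Rightarrow> 'a) \<Rightarrow> bool" where
  "conj_rel Z f H g \<longleftrightarrow> (\<forall>z\<in>Z. f ` H z = H (g z))"

definition non_atomic :: "'a measure \<Rightarrow> bool" where
  "non_atomic \<mu> \<longleftrightarrow> (\<forall>x. emeasure \<mu> {x} = 0)"

definition measure_top_stable :: "'a::metric_space measure \<Rightarrow> ('a \<Rightarrow> 'a) \<Rightarrow> bool" where
  "measure_top_stable \<mu> f \<longleftrightarrow>
    (\<forall>\<epsilon>>0. \<exists>\<delta>>0. \<forall>g. homeo g \<and> dC0 f g \<le> \<delta> \<longrightarrow>
      (\<exists>H. usc UNIV H \<and> compact_valued UNIV H \<and> Dom UNIV H \<in> sets \<mu> \<and>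
           emeasure \<mu> (UNIV - Dom UNIV H) = 0 \<and> (\<forall>x. emeasure \<mu> (H x) = 0) \<and>
           dist_Id_le UNIV H \<epsilon> \<and> conj_rel UNIV f H g))"

definition mu_ts_point :: "'a::metric_space measure \<Rightarrow> ('a \<Rightarrow> 'a) \<Rightarrow> 'a \<Rightarrow> bool" where
  "mu_ts_point \<mu> f x \<longleftrightarrow>
    (\<forall>\<epsilon>>0. \<exists>\<delta>>0. \<forall>g. homeo g \<and> dC0 f g \<le> \<delta> \<longrightarrow>
      (let Z = closure (orbit g x) in
       \<exists>H. usc Z H \<and> compact_valued Z H \<and> Dom Z H \<in> sets \<mu> \<and>
           (\<forall>z\<in>ball x (\<delta>/4) \<inter> Z. emeasure \<mu> (H z) = 0) \<and>
           dist_Id_le Z H \<epsilon> \<and> conj_rel Z f H g))"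

definition strong_mu_ts_point :: "'a::metric_space measure \<Rightarrow> ('a \<Rightarrow> 'a) \<Rightarrow> 'a \<Rightarrow> bool" where
  "strong_mu_ts_point \<mu> f x \<longleftrightarrow>
    (\<forall>\<epsilon>>0. \<exists>\<delta>>0. \<exists>B. B \<in> sets borel \<and> emeasure \<mu> (UNIV - B) = 0 \<and>
      (\<forall>g. homeo g \<and> dC0 f g \<le> \<delta> \<longrightarrow>
      (let Z = closure (orbit g x); U = B \<inter> ball x \<delta> \<inter> Z in
       \<exists>H. usc Z H \<and> compact_valued Z H \<and> Dom Z H \<in> sets \<mu> \<and>
           (\<forall>z\<in>ball x (\<delta>/4) \<inter> Z. emeasure \<mu> (H z) = 0) \<and>
           dist_Id_le Z H \<epsilon> \<and> conj_rel Z f H g \<and>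
           emeasure \<mu> (UNIV - Dom Z H) \<le> emeasure \<mu> (UNIV - U))))"

definition Ts :: "'a::metric_space measure \<Rightarrow> ('a \<Rightarrow> 'a) \<Rightarrow> 'a set" where
  "Ts \<mu> f = {x. mu_ts_point \<mu> f x}"

definition Sts :: "'a::metric_space measure \<Rightarrow> ('a \<Rightarrow> 'a) \<Rightarrow> 'a set" where
  "Sts \<mu> f = {x. strong_mu_ts_point \<mu> f x}"

definition top_stable_point :: "('a::metric_space \<Rightarrow> 'a) \<Rightarrow> 'a \<Rightarrow> bool" where
  "top_stable_point f x \<longleftrightarrow>
    (\<forall>\<epsilon>>0. \<exists>\<delta>>0. \<forall>g. homeo g \<and> dC0 f g \<le> \<delta> \<longrightarrow>
      (let Z = closure (orbit g x) in
       \<exists>h. continuous_on Z h \<and> (\<forall>z\<in>Z. f (h z) = h (g z)) \<and> (\<forall>z\<in>Z. dist (h z) z \<le> \<epsilon>)))"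

definition pushfwd :: "'a measure \<Rightarrow> ('a \<Rightarrow> 'b::topological_space) \<Rightarrow> 'b measure" where
  "pushfwd \<mu> h = distr \<mu> borel h"

end

theory Submission
  imports Defs
begin

(* (i) A global stability map restricts to every orbit closure.
   (ii) Conjugating by h transports stability maps, H \<mapsto> h \<circ> H \<circ> h\<inverse>: the orbit closure of
   h x under g is the h-image of the orbit closure of x under h\<inverse> \<circ> g \<circ> h, the constants
   \<epsilon> and \<delta> are adjusted by uniform continuity of h and h\<inverse> on the compact spaces, and the
   push-forward measure makes the null-set conditions correspond.  The reverse inclusion is
   the same statement for h\<inverse>.
   (iii) The continuous semiconjugacy h given by topological stability yields the
   singleton-valued map z \<mapsto> {h z}: it is upper semi-continuous, its values are null because
   \<mu> is non-atomic, and its domain is the whole orbit closure, so B = X works in (iv). *)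

lemma dC0_leI: "(\<And>x. dist (f x) (g x) \<le> d) \<Longrightarrow> dC0 f g \<le> d"
  unfolding dC0_def by (rule cSUP_least) auto

lemma dist_le_dC0:
  fixes f g :: "'a \<Rightarrow> 'b::metric_space"
  assumes "bounded (UNIV :: 'b set)"
  shows "dist (f x) (g x) \<le> dC0 f g"
proof -
  obtain e where e: "\<And>y. dist (undefined :: 'b) y \<le> e"
    using assms unfolding bounded_any_center[of UNIV undefined] by auto
  have "dist (f z) (g z) \<le> 2 * e" for z
    using dist_triangle3[of "f z" "g z" undefined] e[of "f z"] e[of "g z"] by linarith
  then have "bdd_above (range (\<lambda>z. dist (f z) (g z)))"
    by (intro bdd_aboveI[of _ "2 * e"]) auto
  then show ?thesis
    unfolding dC0_def by (rule cSUP_upper[OF UNIV_I])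
qed

lemma compact_uniformly_continuous_le:
  fixes h :: "'a::metric_space \<Rightarrow> 'b::metric_space"
  assumes "compact (UNIV :: 'a set)" "continuous_on UNIV h" "e > 0"
  obtains d where "d > 0" "\<And>a b. dist a b \<le> d \<Longrightarrow> dist (h a) (h b) < e"
proof -
  have "uniformly_continuous_on UNIV h"
    using compact_uniformly_continuous[OF assms(2,1)] .
  then obtain d where "d > 0" and d: "\<forall>b\<in>UNIV. \<forall>a\<in>UNIV. dist a b < d \<longrightarrow> dist (h a) (h b) < e"
    using assms(3) unfolding uniformly_continuous_on_def by blast
  show thesis
  proof (rule that[of "d / 2"])
    show "d / 2 > 0"
      using \<open>d > 0\<close> by simp
    show "dist (h a) (h b) < e" if "dist a b \<le> d / 2" for a b
      using d that \<open>d > 0\<close> by simp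
  qed
qed

subsection \<open>Conjugation by a homeomorphism\<close>

lemma homeomorphism_inv_eq:
  assumes "homeomorphism UNIV UNIV g g'"
  shows "inv g = g'"
  using assms by (intro inv_unique_comp) (auto simp: homeomorphism_def fun_eq_iff)

lemma homeo_conjugate:
  assumes "homeomorphism UNIV UNIV h k" "homeo g"
  shows "homeo (k \<circ> g \<circ> h)"
proof -
  obtain g' where "homeomorphism UNIV UNIV g g'"
    using assms(2) by (auto simp: homeo_def)
  from homeomorphism_compose[OF homeomorphism_compose[OF assms(1) this] homeomorphism_symD[OF assms(1)]]
  show ?thesis
    by (auto simp: homeo_def o_assoc)
qed

lemma conjugate_conjugate:
  assumes "homeomorphism UNIV UNIV h k"
  shows "k \<circ> (h \<circ> f \<circ> k) \<circ> h = f"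
  using assms by (auto simp: homeomorphism_def fun_eq_iff)

lemma orbit_conjugate:
  assumes hom: "homeomorphism UNIV UNIV h k" and "homeo g"
  shows "orbit g (h x) = h ` orbit (k \<circ> g \<circ> h) x"
proof -
  have kh: "\<And>x. k (h x) = x" and hk: "\<And>y. h (k y) = y"
    using hom by (auto simp: homeomorphism_def)
  obtain g' where g: "homeomorphism UNIV UNIV g g'"
    using assms(2) by (auto simp: homeo_def)
  have "homeomorphism UNIV UNIV (k \<circ> g \<circ> h) (k \<circ> g' \<circ> h)"
    using homeomorphism_compose[OF homeomorphism_compose[OF hom g] homeomorphism_symD[OF hom]]
    by (simp add: o_assoc)
  then have inv_conj: "inv (k \<circ> g \<circ> h) = k \<circ> inv g \<circ> h"
    by (simp add: homeomorphism_inv_eq[OF g] homeomorphism_inv_eq)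
  have iterate: "(k \<circ> q \<circ> h) ^^ n = k \<circ> q ^^ n \<circ> h" for q n
    by (induction n) (auto simp: kh hk)
  have image_orbit: "h ` {((k \<circ> q \<circ> h) ^^ n) x |n. True} = {(q ^^ n) (h x) |n. True}" for q
  proof -
    have "{((k \<circ> q \<circ> h) ^^ n) x |n. True} = k ` {(q ^^ n) (h x) |n. True}"
      unfolding iterate by auto
    then show ?thesis
      by (simp add: image_image hk)
  qed
  show ?thesis
    unfolding orbit_def inv_conj image_Un image_orbit ..
qed

lemma closure_homeomorphism_image:
  assumes "homeomorphism UNIV UNIV h k"
  shows "closure (h ` S) = h ` closure S"
proof
  have ch: "continuous_on UNIV h" and ck: "continuous_on UNIV k"
    and kh: "\<And>x. k (h x) = x" and hk: "\<And>y. h (k y) = y"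
    using assms by (auto simp: homeomorphism_def)
  show "h ` closure S \<subseteq> closure (h ` S)"
    by (rule image_closure_subset) (auto intro: continuous_on_subset[OF ch] closure_subset image_eqI subsetD[OF closure_subset])
  have "k ` closure (h ` S) \<subseteq> closure (k ` h ` S)"
    by (rule image_closure_subset) (auto intro: continuous_on_subset[OF ck] closure_subset image_eqI subsetD[OF closure_subset])
  also have "k ` h ` S = S"
    by (simp add: image_image kh)
  finally have "k ` closure (h ` S) \<subseteq> closure S" .
  then show "closure (h ` S) \<subseteq> h ` closure S"
    using hk by (auto intro: image_eqI[where f = h, OF hk[symmetric]])
qed

lemma closure_orbit_conjugate:
  assumes hom: "homeomorphism UNIV UNIV h k" and "homeo g"
  shows "closure (orbit g (h x)) = k -` closure (orbit (k \<circ> g \<circ> h) x)"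
proof -
  have kh: "\<And>x. k (h x) = x" and hk: "\<And>y. h (k y) = y"
    using hom by (auto simp: homeomorphism_def)
  have "h ` S = k -` S" for S
    using kh by (auto intro: image_eqI[where f = h, OF hk[symmetric]])
  then show ?thesis
    using orbit_conjugate[OF assms] closure_homeomorphism_image[OF hom] by simp
qed

lemma conjugate_perturbation:
  fixes h :: "'a::metric_space \<Rightarrow> 'b::metric_space"
  assumes "compact (UNIV :: 'b set)" "homeomorphism UNIV UNIV h k" "\<delta>' > 0"
  obtains \<delta> where "\<delta> > 0"
    "\<And>g. dC0 (h \<circ> f \<circ> k) g \<le> \<delta> \<Longrightarrow> dC0 f (k \<circ> g \<circ> h) \<le> \<delta>'"
    "\<And>x. k ` ball (h x) \<delta> \<subseteq> ball x (\<delta>' / 4)"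
proof -
  have ck: "continuous_on UNIV k" and kh: "\<And>x. k (h x) = x"
    using assms(2) by (auto simp: homeomorphism_def)
  have "\<delta>' / 4 > 0"
    using assms(3) by simp
  then obtain d where "d > 0" and d: "\<And>a b. dist a b \<le> d \<Longrightarrow> dist (k a) (k b) < \<delta>' / 4"
    using compact_uniformly_continuous_le[OF assms(1) ck] by blast
  show thesis
  proof (rule that[OF \<open>d > 0\<close>])
    fix g assume "dC0 (h \<circ> f \<circ> k) g \<le> d"
    then have "dist (h (f a)) (g (h a)) \<le> d" for a
      using dist_le_dC0[OF compact_imp_bounded[OF assms(1)], where f = "h \<circ> f \<circ> k" and g = g and x = "h a"]
      by (simp add: kh)
    then have "dist (f a) (k (g (h a))) < \<delta>' / 4" for a
      using d[of "h (f a)" "g (h a)"] by (simp add: kh)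
    moreover have "\<delta>' / 4 \<le> \<delta>'"
      using assms(3) by simp
    ultimately show "dC0 f (k \<circ> g \<circ> h) \<le> \<delta>'"
      by (intro dC0_leI) (metis comp_apply less_le_trans less_imp_le)
  next
    show "k ` ball (h x) d \<subseteq> ball x (\<delta>' / 4)" for x
      using d[of "h x"] by (auto simp: kh less_imp_le)
  qed
qed

subsection \<open>Push-forward measures\<close>

lemma sets_pushfwd [simp]: "sets (pushfwd \<mu> h) = sets borel"
  by (simp add: pushfwd_def)

lemma emeasure_pushfwd:
  assumes "sets \<mu> = sets borel" "continuous_on UNIV h" "A \<in> sets borel"
  shows "emeasure (pushfwd \<mu> h) A = emeasure \<mu> (h -` A)"
proof -
  have "h \<in> measurable \<mu> borel"
    using borel_measurable_continuous_onI[OF assms(2)] measurable_cong_sets[OF assms(1) refl] by blast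
  then show ?thesis
    unfolding pushfwd_def using assms(1) by (simp add: emeasure_distr[OF _ assms(3)] sets_eq_imp_space_eq)
qed

lemma pushfwd_pushfwd_inverse:
  assumes hom: "homeomorphism UNIV UNIV h k" and sm: "sets \<mu> = sets borel"
  shows "pushfwd (pushfwd \<mu> h) k = \<mu>"
proof -
  have ch: "continuous_on UNIV h" and ck: "continuous_on UNIV k" and kh: "\<And>x. k (h x) = x"
    using hom by (auto simp: homeomorphism_def)
  have "h \<in> measurable \<mu> borel"
    using borel_measurable_continuous_onI[OF ch] measurable_cong_sets[OF sm refl] by blast
  then have "pushfwd (pushfwd \<mu> h) k = distr \<mu> borel (k \<circ> h)"
    unfolding pushfwd_def by (rule distr_distr[OF borel_measurable_continuous_onI[OF ck]])
  also have "\<dots> = distr \<mu> borel (\<lambda>x. x)"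
    by (rule distr_cong) (auto simp: kh)
  also have "\<dots> = \<mu>"
    by (rule distr_id2) (simp add: sm)
  finally show ?thesis .
qed

lemma vimage_continuous_in_borel:
  "continuous_on UNIV k \<Longrightarrow> S \<in> sets borel \<Longrightarrow> k -` S \<in> sets borel"
  using measurable_sets[OF borel_measurable_continuous_onI] by fastforce

lemma emeasure_compl_le_pushfwd:
  assumes "sets \<mu> = sets borel" "continuous_on UNIV h" "A \<in> sets borel" "h -` A \<subseteq> C"
  shows "emeasure \<mu> (UNIV - C) \<le> emeasure (pushfwd \<mu> h) (UNIV - A)"
proof -
  have "UNIV - A \<in> sets borel"
    using assms(3) by (metis sets.compl_sets space_borel)
  moreover have "h -` (UNIV - A) \<in> sets \<mu>"
    using vimage_continuous_in_borel[OF assms(2) \<open>UNIV - A \<in> sets borel\<close>] assms(1) by simp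
  ultimately show ?thesis
    using assms by (auto simp: emeasure_pushfwd intro!: emeasure_mono)
qed

subsection \<open>Set-valued maps\<close>

lemma usc_subset:
  assumes "usc S H" "Z \<subseteq> S"
  shows "usc Z H"
  unfolding usc_def
proof (intro ballI allI impI)
  fix z V assume "z \<in> Dom Z H" and V: "open V \<and> H z \<subseteq> V"
  then have "z \<in> Dom S H"
    using assms(2) by (auto simp: Dom_def)
  then obtain \<gamma> where "\<gamma> > 0" "\<forall>w\<in>S. dist w z < \<gamma> \<longrightarrow> H w \<subseteq> V"
    using assms(1) V unfolding usc_def by blast
  then show "\<exists>\<gamma>>0. \<forall>w\<in>Z. dist w z < \<gamma> \<longrightarrow> H w \<subseteq> V"
    using assms(2) by blast
qed

lemma usc_singleton:
  assumes "continuous_on Z h"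
  shows "usc Z (\<lambda>z. {h z})"
  unfolding usc_def
proof (intro ballI allI impI)
  fix z V assume z: "z \<in> Dom Z (\<lambda>z. {h z})" and V: "open V \<and> {h z} \<subseteq> V"
  then have "z \<in> Z" "open V" "h z \<in> V"
    by (auto simp: Dom_def)
  then obtain A where "open A" "z \<in> A" and A: "\<forall>w\<in>Z. w \<in> A \<longrightarrow> h w \<in> V"
    using assms unfolding continuous_on_topological by blast
  then obtain \<gamma> where "\<gamma> > 0" and "ball z \<gamma> \<subseteq> A"
    using open_contains_ball by blast
  then have "w \<in> A" if "dist w z < \<gamma>" for w
    using that by (auto simp: dist_commute)
  then have "\<forall>w\<in>Z. dist w z < \<gamma> \<longrightarrow> {h w} \<subseteq> V"
    using A by blast
  then show "\<exists>\<gamma>>0. \<forall>w\<in>Z. dist w z < \<gamma> \<longrightarrow> {h w} \<subseteq> V"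
    using \<open>\<gamma> > 0\<close> by blast
qed

lemma usc_conjugate:
  assumes hom: "homeomorphism UNIV UNIV h k" and "usc Z H"
  shows "usc (k -` Z) (\<lambda>z. h ` H (k z))"
  unfolding usc_def
proof (intro ballI allI impI)
  have ch: "continuous_on UNIV h" and ck: "continuous_on UNIV k"
    using hom by (auto simp: homeomorphism_def)
  fix z V assume z: "z \<in> Dom (k -` Z) (\<lambda>z. h ` H (k z))" and V: "open V \<and> h ` H (k z) \<subseteq> V"
  have "k z \<in> Dom Z H"
    using z by (simp add: Dom_def)
  moreover have "open (h -` V)"
    using V ch by (simp add: continuous_on_open_vimage)
  moreover have "H (k z) \<subseteq> h -` V"
    using V by blast
  ultimately obtain \<gamma> where "\<gamma> > 0" and \<gamma>: "\<forall>w\<in>Z. dist w (k z) < \<gamma> \<longrightarrow> H w \<subseteq> h -` V"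
    using assms(2) unfolding usc_def by blast
  then obtain d where "d > 0" and d: "\<forall>w\<in>UNIV. dist w z < d \<longrightarrow> dist (k w) (k z) < \<gamma>"
    using ck unfolding continuous_on_iff by blast
  have "h ` H (k w) \<subseteq> V" if "w \<in> k -` Z" "dist w z < d" for w
    using that d \<gamma> by blast
  then show "\<exists>d>0. \<forall>w\<in>k -` Z. dist w z < d \<longrightarrow> h ` H (k w) \<subseteq> V"
    using \<open>d > 0\<close> by blast
qed

lemma Dom_conjugate: "Dom (k -` Z) (\<lambda>z. h ` H (k z)) = k -` Dom Z H"
  by (auto simp: Dom_def)

subsection \<open>Stability maps\<close>

definition ts_map :: "'a::metric_space measure \<Rightarrow> ('a \<Rightarrow> 'a) \<Rightarrow> 'a \<Rightarrow> real \<Rightarrow> real \<Rightarrow> ('a \<Rightarrow> 'a) \<Rightarrow> ('a \<Rightarrow> 'a set) \<Rightarrow> bool" where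
  "ts_map \<mu> f x \<delta> \<epsilon> g H \<longleftrightarrow>
    (let Z = closure (orbit g x) in
     usc Z H \<and> compact_valued Z H \<and> Dom Z H \<in> sets \<mu> \<and>
     (\<forall>z\<in>ball x (\<delta>/4) \<inter> Z. emeasure \<mu> (H z) = 0) \<and>
     dist_Id_le Z H \<epsilon> \<and> conj_rel Z f H g)"

lemma mu_ts_point_iff:
  "mu_ts_point \<mu> f x \<longleftrightarrow>
    (\<forall>\<epsilon>>0. \<exists>\<delta>>0. \<forall>g. homeo g \<and> dC0 f g \<le> \<delta> \<longrightarrow> (\<exists>H. ts_map \<mu> f x \<delta> \<epsilon> g H))"
  by (simp add: mu_ts_point_def ts_map_def Let_def)

lemma strong_mu_ts_point_iff:
  "strong_mu_ts_point \<mu> f x \<longleftrightarrow>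
    (\<forall>\<epsilon>>0. \<exists>\<delta>>0. \<exists>B. B \<in> sets borel \<and> emeasure \<mu> (UNIV - B) = 0 \<and>
      (\<forall>g. homeo g \<and> dC0 f g \<le> \<delta> \<longrightarrow>
        (\<exists>H. ts_map \<mu> f x \<delta> \<epsilon> g H \<and>
          emeasure \<mu> (UNIV - Dom (closure (orbit g x)) H)
            \<le> emeasure \<mu> (UNIV - B \<inter> ball x \<delta> \<inter> closure (orbit g x)))))"
  by (simp add: strong_mu_ts_point_def ts_map_def Let_def)

lemma ts_map_conjugate:
  fixes h :: "'a::metric_space \<Rightarrow> 'b::metric_space"
  assumes hom: "homeomorphism UNIV UNIV h k" and sm: "sets \<mu> = sets borel" and "homeo g"
    and H: "ts_map \<mu> f x \<delta>' \<epsilon>' (k \<circ> g \<circ> h) H"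
    and \<epsilon>: "\<forall>a b. dist a b \<le> \<epsilon>' \<longrightarrow> dist (h a) (h b) \<le> \<epsilon>"
    and \<delta>: "k ` ball (h x) (\<delta>/4) \<subseteq> ball x (\<delta>'/4)"
  shows "ts_map (pushfwd \<mu> h) (h \<circ> f \<circ> k) (h x) \<delta> \<epsilon> g (\<lambda>z. h ` H (k z))"
proof -
  have ch: "continuous_on UNIV h" and ck: "continuous_on UNIV k"
    and kh: "\<And>x. k (h x) = x" and hk: "\<And>y. h (k y) = y"
    using hom by (auto simp: homeomorphism_def)
  define Z where "Z = closure (orbit (k \<circ> g \<circ> h) x)"
  have H: "usc Z H" "compact_valued Z H" "Dom Z H \<in> sets borel"
    "\<And>z. z \<in> ball x (\<delta>'/4) \<inter> Z \<Longrightarrow> emeasure \<mu> (H z) = 0"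
    "dist_Id_le Z H \<epsilon>'" "conj_rel Z f H (k \<circ> g \<circ> h)"
    using H sm by (auto simp: ts_map_def Z_def Let_def)
  have ZY: "closure (orbit g (h x)) = k -` Z"
    unfolding Z_def using closure_orbit_conjugate[OF hom \<open>homeo g\<close>] .
  have compact: "compact (h ` H (k z))" if "z \<in> k -` Z" for z
    using H(2) that by (auto simp: compact_valued_def intro: compact_continuous_image continuous_on_subset[OF ch])
  have "inj h"
    by (metis kh injI)
  then have emeasure_image: "emeasure (pushfwd \<mu> h) (h ` H (k z)) = emeasure \<mu> (H (k z))" if "z \<in> k -` Z" for z
    using compact[OF that] by (simp add: emeasure_pushfwd[OF sm ch] borel_closed compact_imp_closed inj_vimage_image_eq)
  have "k -` Dom Z H \<in> sets borel"
    using ck H(3) by (rule vimage_continuous_in_borel)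
  moreover have "dist_Id_le (k -` Z) (\<lambda>z. h ` H (k z)) \<epsilon>"
    using H(5) \<epsilon> hk by (fastforce simp: dist_Id_le_def mem_cball)
  moreover have "conj_rel (k -` Z) (h \<circ> f \<circ> k) (\<lambda>z. h ` H (k z)) g"
    unfolding conj_rel_def
  proof
    fix z assume "z \<in> k -` Z"
    then have "f ` H (k z) = H (k (g z))"
      using H(6) by (simp add: conj_rel_def hk)
    moreover have "(h \<circ> f \<circ> k) ` h ` H (k z) = h ` f ` H (k z)"
      by (simp add: image_image kh)
    ultimately show "(h \<circ> f \<circ> k) ` h ` H (k z) = h ` H (k (g z))"
      by simp
  qed
  moreover have "emeasure (pushfwd \<mu> h) (h ` H (k z)) = 0" if "z \<in> ball (h x) (\<delta>/4) \<inter> k -` Z" for z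
  proof -
    have "k z \<in> ball x (\<delta>'/4) \<inter> Z"
      using that \<delta> by blast
    then show ?thesis
      using that H(4) emeasure_image by simp
  qed
  ultimately show ?thesis
    using H(1,2) compact unfolding ts_map_def Let_def ZY
    by (simp add: usc_conjugate[OF hom] Dom_conjugate compact_valued_def)
qed

lemma mu_ts_point_conjugate:
  fixes h :: "'a::metric_space \<Rightarrow> 'b::metric_space"
  assumes cX: "compact (UNIV :: 'a set)" and cY: "compact (UNIV :: 'b set)"
    and hom: "homeomorphism UNIV UNIV h k" and sm: "sets \<mu> = sets borel"
    and "mu_ts_point \<mu> f x"
  shows "mu_ts_point (pushfwd \<mu> h) (h \<circ> f \<circ> k) (h x)"
  unfolding mu_ts_point_iff
proof (intro allI impI)
  have ch: "continuous_on UNIV h"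
    using hom by (simp add: homeomorphism_def)
  fix \<epsilon> :: real assume "\<epsilon> > 0"
  obtain \<epsilon>' where "\<epsilon>' > 0" and \<epsilon>'_less: "\<And>a b. dist a b \<le> \<epsilon>' \<Longrightarrow> dist (h a) (h b) < \<epsilon>"
    using compact_uniformly_continuous_le[OF cX ch \<open>\<epsilon> > 0\<close>] by blast
  have h_close: "\<forall>a b. dist a b \<le> \<epsilon>' \<longrightarrow> dist (h a) (h b) \<le> \<epsilon>"
    using \<epsilon>'_less by (simp add: less_imp_le)
  obtain \<delta>' where "\<delta>' > 0"
    and stable: "\<And>g. homeo g \<and> dC0 f g \<le> \<delta>' \<Longrightarrow> \<exists>H. ts_map \<mu> f x \<delta>' \<epsilon>' g H"
    using assms(5) \<open>\<epsilon>' > 0\<close> unfolding mu_ts_point_iff by blast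
  obtain \<delta> where "\<delta> > 0" and close: "\<And>g. dC0 (h \<circ> f \<circ> k) g \<le> \<delta> \<Longrightarrow> dC0 f (k \<circ> g \<circ> h) \<le> \<delta>'"
    and balls: "\<And>x. k ` ball (h x) \<delta> \<subseteq> ball x (\<delta>' / 4)"
    using conjugate_perturbation[OF cY hom \<open>\<delta>' > 0\<close>, where f = f] by auto
  note ball = balls[of x]
  have "ball (h x) (\<delta> / 4) \<subseteq> ball (h x) \<delta>"
    using \<open>\<delta> > 0\<close> by (intro subset_ball) simp
  then have small_ball: "k ` ball (h x) (\<delta> / 4) \<subseteq> ball x (\<delta>' / 4)"
    by (rule order_trans[OF image_mono ball])
  have "\<exists>H. ts_map (pushfwd \<mu> h) (h \<circ> f \<circ> k) (h x) \<delta> \<epsilon> g H"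
    if g: "homeo g \<and> dC0 (h \<circ> f \<circ> k) g \<le> \<delta>" for g
  proof -
    have "homeo (k \<circ> g \<circ> h) \<and> dC0 f (k \<circ> g \<circ> h) \<le> \<delta>'"
      using homeo_conjugate[OF hom] close g by blast
    then obtain H where "ts_map \<mu> f x \<delta>' \<epsilon>' (k \<circ> g \<circ> h) H"
      using stable by blast
    from ts_map_conjugate[OF hom sm conjunct1[OF g] this h_close small_ball]
    show ?thesis by blast
  qed
  then show "\<exists>\<delta>>0. \<forall>g. homeo g \<and> dC0 (h \<circ> f \<circ> k) g \<le> \<delta> \<longrightarrow>
      (\<exists>H. ts_map (pushfwd \<mu> h) (h \<circ> f \<circ> k) (h x) \<delta> \<epsilon> g H)"
    using \<open>\<delta> > 0\<close> by blast
qed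

lemma strong_mu_ts_point_conjugate:
  fixes h :: "'a::metric_space \<Rightarrow> 'b::metric_space"
  assumes cX: "compact (UNIV :: 'a set)" and cY: "compact (UNIV :: 'b set)"
    and hom: "homeomorphism UNIV UNIV h k" and sm: "sets \<mu> = sets borel"
    and "strong_mu_ts_point \<mu> f x"
  shows "strong_mu_ts_point (pushfwd \<mu> h) (h \<circ> f \<circ> k) (h x)"
  unfolding strong_mu_ts_point_iff
proof (intro allI impI)
  have ch: "continuous_on UNIV h" and ck: "continuous_on UNIV k" and kh: "\<And>x. k (h x) = x"
    using hom by (auto simp: homeomorphism_def)
  then have hk_vimage: "\<And>S. h -` k -` S = S"
    by auto
  fix \<epsilon> :: real assume "\<epsilon> > 0"
  obtain \<epsilon>' where "\<epsilon>' > 0" and \<epsilon>'_less: "\<And>a b. dist a b \<le> \<epsilon>' \<Longrightarrow> dist (h a) (h b) < \<epsilon>"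
    using compact_uniformly_continuous_le[OF cX ch \<open>\<epsilon> > 0\<close>] by blast
  have h_close: "\<forall>a b. dist a b \<le> \<epsilon>' \<longrightarrow> dist (h a) (h b) \<le> \<epsilon>"
    using \<epsilon>'_less by (simp add: less_imp_le)
  obtain \<delta>' B where "\<delta>' > 0" "B \<in> sets borel" "emeasure \<mu> (UNIV - B) = 0"
    and stable: "\<And>g. homeo g \<and> dC0 f g \<le> \<delta>' \<Longrightarrow> \<exists>H. ts_map \<mu> f x \<delta>' \<epsilon>' g H \<and>
      emeasure \<mu> (UNIV - Dom (closure (orbit g x)) H) \<le> emeasure \<mu> (UNIV - B \<inter> ball x \<delta>' \<inter> closure (orbit g x))"
    using assms(5) \<open>\<epsilon>' > 0\<close> unfolding strong_mu_ts_point_iff by blast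
  obtain \<delta> where "\<delta> > 0" and close: "\<And>g. dC0 (h \<circ> f \<circ> k) g \<le> \<delta> \<Longrightarrow> dC0 f (k \<circ> g \<circ> h) \<le> \<delta>'"
    and balls: "\<And>x. k ` ball (h x) \<delta> \<subseteq> ball x (\<delta>' / 4)"
    using conjugate_perturbation[OF cY hom \<open>\<delta>' > 0\<close>, where f = f] by auto
  note ball = balls[of x]
  have "ball (h x) (\<delta> / 4) \<subseteq> ball (h x) \<delta>"
    using \<open>\<delta> > 0\<close> by (intro subset_ball) simp
  then have small_ball: "k ` ball (h x) (\<delta> / 4) \<subseteq> ball x (\<delta>' / 4)"
    by (rule order_trans[OF image_mono ball])
  have "k -` B \<in> sets borel"
    using ck \<open>B \<in> sets borel\<close> by (rule vimage_continuous_in_borel)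
  moreover have "emeasure (pushfwd \<mu> h) (UNIV - k -` B) = 0"
    using \<open>k -` B \<in> sets borel\<close> \<open>emeasure \<mu> (UNIV - B) = 0\<close>
    by (simp add: emeasure_pushfwd[OF sm ch] vimage_Diff hk_vimage)
  moreover have "\<exists>H. ts_map (pushfwd \<mu> h) (h \<circ> f \<circ> k) (h x) \<delta> \<epsilon> g H \<and>
      emeasure (pushfwd \<mu> h) (UNIV - Dom (closure (orbit g (h x))) H)
        \<le> emeasure (pushfwd \<mu> h) (UNIV - k -` B \<inter> ball (h x) \<delta> \<inter> closure (orbit g (h x)))"
    if g: "homeo g \<and> dC0 (h \<circ> f \<circ> k) g \<le> \<delta>" for g
  proof -
    define Z where "Z = closure (orbit (k \<circ> g \<circ> h) x)"
    have ZY: "closure (orbit g (h x)) = k -` Z"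
      unfolding Z_def using closure_orbit_conjugate[OF hom conjunct1[OF g]] .
    have "homeo (k \<circ> g \<circ> h) \<and> dC0 f (k \<circ> g \<circ> h) \<le> \<delta>'"
      using homeo_conjugate[OF hom] close g by blast
    then obtain H where H: "ts_map \<mu> f x \<delta>' \<epsilon>' (k \<circ> g \<circ> h) H"
      and Hdom: "emeasure \<mu> (UNIV - Dom Z H) \<le> emeasure \<mu> (UNIV - B \<inter> ball x \<delta>' \<inter> Z)"
      using stable unfolding Z_def by blast
    have "Dom Z H \<in> sets borel"
      using H sm by (simp add: ts_map_def Let_def Z_def)
    then have "emeasure (pushfwd \<mu> h) (UNIV - Dom (k -` Z) (\<lambda>z. h ` H (k z))) = emeasure \<mu> (UNIV - Dom Z H)"
      using vimage_continuous_in_borel[OF ck]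
      by (simp add: Dom_conjugate emeasure_pushfwd[OF sm ch] vimage_Diff hk_vimage)
    also have "\<dots> \<le> emeasure \<mu> (UNIV - B \<inter> ball x \<delta>' \<inter> Z)"
      by (rule Hdom)
    also have "\<dots> \<le> emeasure (pushfwd \<mu> h) (UNIV - k -` B \<inter> ball (h x) \<delta> \<inter> k -` Z)"
    proof (rule emeasure_compl_le_pushfwd[OF sm ch])
      have "closed Z"
        by (simp add: Z_def)
      then show "k -` B \<inter> ball (h x) \<delta> \<inter> k -` Z \<in> sets borel"
        using \<open>k -` B \<in> sets borel\<close> ck by (intro sets.Int) (auto intro: vimage_continuous_in_borel borel_closed)
      have "ball x (\<delta>' / 4) \<subseteq> ball x \<delta>'"
        using \<open>\<delta>' > 0\<close> by (intro subset_ball) simp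
      with ball have "k ` ball (h x) \<delta> \<subseteq> ball x \<delta>'"
        by (rule order_trans)
      then show "h -` (k -` B \<inter> ball (h x) \<delta> \<inter> k -` Z) \<subseteq> B \<inter> ball x \<delta>' \<inter> Z"
        by (auto simp: kh)
    qed
    finally show ?thesis
      using ts_map_conjugate[OF hom sm conjunct1[OF g] H h_close small_ball]
      unfolding ZY by blast
  qed
  ultimately show "\<exists>\<delta>>0. \<exists>B. B \<in> sets borel \<and> emeasure (pushfwd \<mu> h) (UNIV - B) = 0 \<and>
      (\<forall>g. homeo g \<and> dC0 (h \<circ> f \<circ> k) g \<le> \<delta> \<longrightarrow>
        (\<exists>H. ts_map (pushfwd \<mu> h) (h \<circ> f \<circ> k) (h x) \<delta> \<epsilon> g H \<and>
          emeasure (pushfwd \<mu> h) (UNIV - Dom (closure (orbit g (h x))) H)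
            \<le> emeasure (pushfwd \<mu> h) (UNIV - B \<inter> ball (h x) \<delta> \<inter> closure (orbit g (h x)))))"
    using \<open>\<delta> > 0\<close> by blast
qed

lemma homeomorphism_image_eqI:
  assumes hom: "homeomorphism UNIV UNIV h k"
    and "\<And>x. x \<in> A \<Longrightarrow> h x \<in> B" and "\<And>y. y \<in> B \<Longrightarrow> k y \<in> A"
  shows "B = h ` A"
proof
  show "B \<subseteq> h ` A"
    using assms(3) homeomorphism_apply2[OF hom] by (metis UNIV_I image_eqI subsetI)
qed (use assms(2) in blast)

lemma Ts_conjugate:
  fixes h :: "'a::metric_space \<Rightarrow> 'b::metric_space"
  assumes cX: "compact (UNIV :: 'a set)" and cY: "compact (UNIV :: 'b set)"
    and hom: "homeomorphism UNIV UNIV h k" and sm: "sets \<mu> = sets borel"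
  shows "Ts (pushfwd \<mu> h) (h \<circ> f \<circ> k) = h ` Ts \<mu> f"
proof (rule homeomorphism_image_eqI[OF hom])
  show "h x \<in> Ts (pushfwd \<mu> h) (h \<circ> f \<circ> k)" if "x \<in> Ts \<mu> f" for x
    using mu_ts_point_conjugate[OF cX cY hom sm] that by (simp add: Ts_def)
  show "k y \<in> Ts \<mu> f" if "y \<in> Ts (pushfwd \<mu> h) (h \<circ> f \<circ> k)" for y
    using mu_ts_point_conjugate[OF cY cX homeomorphism_symD[OF hom] sets_pushfwd[of \<mu> h], where f = "h \<circ> f \<circ> k"] that
    unfolding Ts_def pushfwd_pushfwd_inverse[OF hom sm] conjugate_conjugate[OF hom] by simp
qed

lemma Sts_conjugate:
  fixes h :: "'a::metric_space \<Rightarrow> 'b::metric_space"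
  assumes cX: "compact (UNIV :: 'a set)" and cY: "compact (UNIV :: 'b set)"
    and hom: "homeomorphism UNIV UNIV h k" and sm: "sets \<mu> = sets borel"
  shows "Sts (pushfwd \<mu> h) (h \<circ> f \<circ> k) = h ` Sts \<mu> f"
proof (rule homeomorphism_image_eqI[OF hom])
  show "h x \<in> Sts (pushfwd \<mu> h) (h \<circ> f \<circ> k)" if "x \<in> Sts \<mu> f" for x
    using strong_mu_ts_point_conjugate[OF cX cY hom sm] that by (simp add: Sts_def)
  show "k y \<in> Sts \<mu> f" if "y \<in> Sts (pushfwd \<mu> h) (h \<circ> f \<circ> k)" for y
    using strong_mu_ts_point_conjugate[OF cY cX homeomorphism_symD[OF hom] sets_pushfwd[of \<mu> h], where f = "h \<circ> f \<circ> k"] that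
    unfolding Sts_def pushfwd_pushfwd_inverse[OF hom sm] conjugate_conjugate[OF hom] by simp
qed

lemma mu_ts_point_if_measure_top_stable:
  assumes sm: "sets \<mu> = sets borel" and "measure_top_stable \<mu> f"
  shows "mu_ts_point \<mu> f x"
  unfolding mu_ts_point_iff
proof (intro allI impI)
  fix \<epsilon> :: real assume "\<epsilon> > 0"
  then obtain \<delta> where "\<delta> > 0" and stable: "\<And>g. homeo g \<and> dC0 f g \<le> \<delta> \<Longrightarrow>
      \<exists>H. usc UNIV H \<and> compact_valued UNIV H \<and> Dom UNIV H \<in> sets \<mu> \<and>
        emeasure \<mu> (UNIV - Dom UNIV H) = 0 \<and> (\<forall>x. emeasure \<mu> (H x) = 0) \<and>
        dist_Id_le UNIV H \<epsilon> \<and> conj_rel UNIV f H g"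
    using assms(2) unfolding measure_top_stable_def by blast
  have "\<exists>H. ts_map \<mu> f x \<delta> \<epsilon> g H" if g: "homeo g \<and> dC0 f g \<le> \<delta>" for g
  proof -
    define Z where "Z = closure (orbit g x)"
    obtain H where H: "usc UNIV H" "compact_valued UNIV H" "Dom UNIV H \<in> sets \<mu>"
      "\<And>x. emeasure \<mu> (H x) = 0" "dist_Id_le UNIV H \<epsilon>" "conj_rel UNIV f H g"
      using stable[OF g] by blast
    have "Dom Z H = Dom UNIV H \<inter> Z"
      by (auto simp: Dom_def)
    moreover have "Z \<in> sets \<mu>"
      using sm by (simp add: Z_def borel_closed)
    ultimately have "Dom Z H \<in> sets \<mu>"
      using H(3) by auto
    then have "ts_map \<mu> f x \<delta> \<epsilon> g H"
      using usc_subset[OF H(1)] H(2,4-6)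
      by (simp add: ts_map_def Z_def compact_valued_def dist_Id_le_def conj_rel_def)
    then show ?thesis by blast
  qed
  then show "\<exists>\<delta>>0. \<forall>g. homeo g \<and> dC0 f g \<le> \<delta> \<longrightarrow> (\<exists>H. ts_map \<mu> f x \<delta> \<epsilon> g H)"
    using \<open>\<delta> > 0\<close> by blast
qed

lemma strong_mu_ts_point_if_top_stable_point:
  assumes sm: "sets \<mu> = sets borel" and "non_atomic \<mu>" and "top_stable_point f x"
  shows "strong_mu_ts_point \<mu> f x"
  unfolding strong_mu_ts_point_iff
proof (intro allI impI)
  fix \<epsilon> :: real assume "\<epsilon> > 0"
  then obtain \<delta> where "\<delta> > 0" and stable: "\<And>g. homeo g \<and> dC0 f g \<le> \<delta> \<Longrightarrow>
      \<exists>h. continuous_on (closure (orbit g x)) h \<and> (\<forall>z\<in>closure (orbit g x). f (h z) = h (g z)) \<and>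
        (\<forall>z\<in>closure (orbit g x). dist (h z) z \<le> \<epsilon>)"
    using assms(3) unfolding top_stable_point_def Let_def by blast
  have "\<exists>H. ts_map \<mu> f x \<delta> \<epsilon> g H \<and>
      emeasure \<mu> (UNIV - Dom (closure (orbit g x)) H)
        \<le> emeasure \<mu> (UNIV - UNIV \<inter> ball x \<delta> \<inter> closure (orbit g x))"
    if g: "homeo g \<and> dC0 f g \<le> \<delta>" for g
  proof -
    define Z where "Z = closure (orbit g x)"
    obtain h where h: "continuous_on Z h" "\<forall>z\<in>Z. f (h z) = h (g z)" "\<forall>z\<in>Z. dist (h z) z \<le> \<epsilon>"
      using stable[OF g] unfolding Z_def by blast
    have Dom: "Dom Z (\<lambda>z. {h z}) = Z"
      by (simp add: Dom_def)
    have "Z \<in> sets \<mu>"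
      using sm by (simp add: Z_def borel_closed)
    have "ts_map \<mu> f x \<delta> \<epsilon> g (\<lambda>z. {h z})"
      using usc_singleton[OF h(1)] h(2,3) \<open>Z \<in> sets \<mu>\<close> assms(2)
      by (simp add: ts_map_def Z_def [symmetric] Dom compact_valued_def dist_Id_le_def
          conj_rel_def non_atomic_def dist_commute)
    moreover have "emeasure \<mu> (UNIV - Dom Z (\<lambda>z. {h z})) \<le> emeasure \<mu> (UNIV - UNIV \<inter> ball x \<delta> \<inter> Z)"
      unfolding Dom using \<open>Z \<in> sets \<mu>\<close> sm
      by (intro emeasure_mono) (auto intro!: sets.Diff sets.Int borel_open)
    ultimately show ?thesis
      unfolding Z_def by blast
  qed
  then show "\<exists>\<delta>>0. \<exists>B. B \<in> sets borel \<and> emeasure \<mu> (UNIV - B) = 0 \<and>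
      (\<forall>g. homeo g \<and> dC0 f g \<le> \<delta> \<longrightarrow>
        (\<exists>H. ts_map \<mu> f x \<delta> \<epsilon> g H \<and>
          emeasure \<mu> (UNIV - Dom (closure (orbit g x)) H)
            \<le> emeasure \<mu> (UNIV - B \<inter> ball x \<delta> \<inter> closure (orbit g x))))"
    using \<open>\<delta> > 0\<close> by (intro exI[of _ \<delta>] exI[of _ UNIV]) auto
qed

theorem proposition3p8:
  fixes f :: "'a::metric_space \<Rightarrow> 'a" and \<mu> :: "'a measure"
  assumes "compact (UNIV :: 'a set)"
    and "homeo f"
    and "sets \<mu> = sets borel"
    and "emeasure \<mu> UNIV > 0"
  shows "(measure_top_stable \<mu> f \<longrightarrow> Ts \<mu> f = UNIV)
    \<and> (\<forall>(h :: 'a \<Rightarrow> 'b::metric_space) k. compact (UNIV :: 'b set) \<and> homeomorphism UNIV UNIV h k \<longrightarrow>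
          Ts (pushfwd \<mu> h) (h \<circ> f \<circ> k) = h ` Ts \<mu> f \<and>
          Sts (pushfwd \<mu> h) (h \<circ> f \<circ> k) = h ` Sts \<mu> f)
    \<and> (\<forall>x. non_atomic \<mu> \<and> top_stable_point f x \<longrightarrow> strong_mu_ts_point \<mu> f x)"
proof -
  note cX = assms(1) and sm = assms(3)
  have "measure_top_stable \<mu> f \<longrightarrow> Ts \<mu> f = UNIV"
    using mu_ts_point_if_measure_top_stable[OF sm] by (auto simp: Ts_def)
  moreover have "Ts (pushfwd \<mu> h) (h \<circ> f \<circ> k) = h ` Ts \<mu> f \<and>
      Sts (pushfwd \<mu> h) (h \<circ> f \<circ> k) = h ` Sts \<mu> f"
    if "compact (UNIV :: 'b::metric_space set)" "homeomorphism UNIV UNIV h k" for h :: "'a \<Rightarrow> 'b" and k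
    using Ts_conjugate[OF cX that sm] Sts_conjugate[OF cX that sm] by blast
  moreover have "strong_mu_ts_point \<mu> f x" if "non_atomic \<mu>" "top_stable_point f x" for x
    using strong_mu_ts_point_if_top_stable_point[OF sm that] .
  ultimately show ?thesis
    by blast
qed

end
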